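(* If $p\le 1-1/e^2$, then for every $n$ we have $x_0(n)=0$.
   Context: Let $p\in(0,1)$ be constant, $q=1-p$, $b=1/q$, $\gamma=\gamma(n)=2\log_b n-2\log_b\log_b n-2\log_b 2$, $\Delta=\gamma-\lfloor\gamma\rfloor\in[0,1)$. Define $\varphi(x)=\varphi_n(x)=(1-\Delta+x)\log_b(1-\Delta+x)+(1-\Delta)(\Delta-x)/2$, and let $x_0=x_0(n)$ be the smallest nonnegative $x$ with $\varphi_n(x)\le0$ (well defined since $\varphi_n(\Delta)=0$, and $x_0\in[0,\Delta]$). *)

theory Defs
  imports Complex_Main
begin

definition gamma_n :: "real \<Rightarrow> nat \<Rightarrow> real" where
  "gamma_n p n = (let b = 1 / (1 - p) in
     2 * log b (real n) - 2 * log b (log b (real n)) - 2 * log b 2)"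

definition Delta_n :: "real \<Rightarrow> nat \<Rightarrow> real" where
  "Delta_n p n = gamma_n p n - of_int \<lfloor>gamma_n p n\<rfloor>"

definition phi_n :: "real \<Rightarrow> nat \<Rightarrow> real \<Rightarrow> real" where
  "phi_n p n x = (let b = 1 / (1 - p); \<Delta> = Delta_n p n in
     (1 - \<Delta> + x) * log b (1 - \<Delta> + x) + (1 - \<Delta>) * (\<Delta> - x) / 2)"

definition x0_n :: "real \<Rightarrow> nat \<Rightarrow> real" where
  "x0_n p n = (LEAST x::real. 0 \<le> x \<and> phi_n p n x \<le> 0)"

end

theory Submission
  imports Defs
begin

text \<open>At \<open>x = 0\<close> we have \<open>\<phi>(0) = t (log\<^sub>b t + (1 - t)/2)\<close> with \<open>t = 1 - \<Delta> \<in> (0,1]\<close>.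
  The hypothesis on \<open>p\<close> says exactly \<open>ln b \<le> 2\<close>, and then \<open>ln t \<le> t - 1\<close> gives
  \<open>log\<^sub>b t \<le> (t - 1)/2\<close>, so \<open>\<phi>(0) \<le> 0\<close> and the least admissible \<open>x\<close> is \<open>0\<close>.\<close>

lemma log_le_half_diff_one:
  fixes b t :: real
  assumes "1 < b" "b \<le> exp 2" "0 < t" "t \<le> 1"
  shows "log b t \<le> (t - 1) / 2"
proof -
  have ln_b: "0 < ln b" "ln b \<le> 2"
    using assms ln_le_cancel_iff[of b "exp 2"] by auto
  have "ln t \<le> t - 1"
    using assms by (simp add: ln_le_minus_one)
  also have "\<dots> \<le> (t - 1) * ln b / 2"
    using ln_b assms mult_left_mono_neg[of "ln b" 2 "t - 1"] by simp
  finally show ?thesis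
    using ln_b by (simp add: log_def divide_simps)
qed

lemma one_div_one_minus_bounds:
  fixes p :: real
  assumes "0 < p" "p \<le> 1 - 1 / exp 2"
  shows "1 < 1 / (1 - p)" "1 / (1 - p) \<le> exp 2"
proof -
  have one_minus_p: "1 / exp 2 \<le> 1 - p" "1 - p < 1"
    using assms by linarith+
  moreover have "0 < 1 - p"
  proof -
    have "0 < 1 / exp (2::real)"
      by simp
    then show ?thesis
      using one_minus_p(1) by linarith
  qed
  ultimately show "1 < 1 / (1 - p)" "1 / (1 - p) \<le> exp 2"
    by (simp_all add: field_simps)
qed

lemma Delta_n_bounds: "0 \<le> Delta_n p n" "Delta_n p n < 1"
  unfolding Delta_n_def by linarith+

lemma phi_n_zero_nonpos:
  fixes p :: real
  assumes "0 < p" "p \<le> 1 - 1 / exp 2"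
  shows "phi_n p n 0 \<le> 0"
proof -
  define t where "t = 1 - Delta_n p n"
  have t: "0 < t" "t \<le> 1"
    using Delta_n_bounds[of p n] unfolding t_def by auto
  have "log (1 / (1 - p)) t \<le> (t - 1) / 2"
    using log_le_half_diff_one[OF one_div_one_minus_bounds[OF assms] t] .
  then have "t * log (1 / (1 - p)) t \<le> t * ((t - 1) / 2)"
    using t by (intro mult_left_mono) auto
  then show ?thesis
    unfolding phi_n_def Let_def t_def[symmetric] by (simp add: t_def algebra_simps)
qed

theorem lemma3:
  fixes p :: real
  assumes "0 < p" "p < 1" "p \<le> 1 - 1 / exp 2"
  shows "\<forall>n::nat. n \<ge> 2 \<longrightarrow> x0_n p n = 0"
proof (intro allI impI)
  fix n :: nat
  show "x0_n p n = 0"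
    unfolding x0_n_def
    by (rule Least_equality) (use phi_n_zero_nonpos[OF assms(1,3), of n] in auto)
qed

end
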